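(* For every $n\ge2$, $$\sum_{T}\ \sum_{\{u,w\}\ni e_T} d(u,w)=\binom n2 c_{n-1}.$$ Here $T$ ranges over all plane trees on $n$ vertices, $e_T$ is the key edge of $T$, and $\{u,w\}$ ranges over unordered pairs of distinct vertices of $T$ whose connecting path contains $e_T$.
   Context: General (plane) trees are rooted trees in which each vertex may have any number of children, linearly ordered. The size of a tree is its number of vertices. The key edge of a plane tree with at least two vertices is the edge between the root and its leftmost (first) child. $d(u,w)$ is the number of edges of the path between $u$ and $w$. $c_{n-1}=\frac1n\binom{2n-2}{n-1}$ is the Catalan number. *)

theory Defs
  imports Complex_Main "HOL-Library.List_Lexorder"
begin

datatype ptree = Node "ptree list"

fun tsize :: "ptree \<Rightarrow> nat" where
  "tsize (Node ts) = Suc (sum_list (map tsize ts))"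

text \<open>Vertices are identified with their positions (Dewey addresses):
  the root is [], and i # p is vertex p of the i-th subtree (0-indexed).\<close>
function vertices :: "ptree \<Rightarrow> nat list set" where
  "vertices (Node ts) = insert [] (\<Union>i \<in> {..<length ts}. (#) i ` vertices (ts ! i))"
  by pat_completeness auto
termination
  by (relation "measure size") (auto simp: less_Suc_eq_le intro!: size_list_estimation' nth_mem)

text \<open>Longest common prefix of two positions (= their lowest common ancestor).\<close>
fun lcp :: "nat list \<Rightarrow> nat list \<Rightarrow> nat list" where
  "lcp (x # xs) (y # ys) = (if x = y then x # lcp xs ys else [])"
| "lcp _ _ = []"

text \<open>Edges of the path between u and w, each edge given as a (parent, child) pair.\<close>
definition path_edges :: "nat list \<Rightarrow> nat list \<Rightarrow> (nat list \<times> nat list) set" where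
  "path_edges u w =
     {(take k u, take (Suc k) u) | k. length (lcp u w) \<le> k \<and> k < length u} \<union>
     {(take k w, take (Suc k) w) | k. length (lcp u w) \<le> k \<and> k < length w}"

definition tdist :: "nat list \<Rightarrow> nat list \<Rightarrow> nat" where
  "tdist u w = card (path_edges u w)"

text \<open>The key edge: between the root and its leftmost child.\<close>
definition key_edge :: "nat list \<times> nat list" where
  "key_edge = ([], [0])"

text \<open>Unordered pairs {u,w} of distinct vertices whose path contains the key edge,
  each represented once as (u,w) with u < w (lexicographic order on positions).\<close>
definition key_pairs :: "ptree \<Rightarrow> (nat list \<times> nat list) set" where
  "key_pairs T = {(u, w). u \<in> vertices T \<and> w \<in> vertices T \<and> u < w \<and> key_edge \<in> path_edges u w}"

end

theory Submission
  imports Defs "HOL-Computational_Algebra.Formal_Power_Series"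
begin

(* Deleting the key edge of T splits it into the first subtree A (rooted at the leftmost child)
   and the remaining tree B.  A pair {u, w} uses the key edge iff one vertex lies in A and the other
   in B, and then d(u, w) = (depth u + 1) + depth w.  Hence the key-distance sum of T equals
   |B| (P(A) + |A|) + |A| P(B), where P is the total path length (sum of all depths).
   With generating functions T(x) for the number of trees, G = x T' for their total size, Q for
   their total path length and S for the key-distance sums, this reads
   T = x + T^2,  Q = (Q + G) T + T Q,  S = (Q + G) G + G Q.
   Multiplying by 1 - 2T eliminates Q and gives 2S = x^2 T'', i.e. S_n = (n choose 2) T_n,
   and T_n = c_(n-1) because 2T = 1 - sqrt(1 - 4x). *)

unbundle fps_syntax

section \<open>Positions and distances\<close>

fun shift_first :: "nat list \<Rightarrow> nat list" where
  "shift_first [] = []"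
| "shift_first (i # p) = Suc i # p"

lemma inj_shift_first: "inj shift_first"
proof (rule injI)
  fix p q :: "nat list"
  show "shift_first p = shift_first q \<Longrightarrow> p = q" by (cases p; cases q) auto
qed

lemma shift_first_neq_Cons_0 [simp]: "shift_first q \<noteq> 0 # p" "0 # p \<noteq> shift_first q"
  by (cases q; auto)+

lemma length_shift_first [simp]: "length (shift_first p) = length p"
  by (cases p) auto

lemma lcp_Cons_0_shift_first [simp]: "lcp (0 # p) (shift_first q) = []"
  by (cases q) auto

lemma ptree_Cons_induct [case_names Nil Cons]:
  assumes "P (Node [])" and "\<And>A ts. P A \<Longrightarrow> P (Node ts) \<Longrightarrow> P (Node (A # ts))"
  shows "P T"
proof (induction T)
  case (Node ts)
  then show ?case by (induction ts) (auto intro: assms)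
qed

lemma vertices_Nil: "vertices (Node []) = {[]}"
  by (simp add: vertices.simps)

declare vertices.simps [simp del]

lemma vertices_Cons:
  "vertices (Node (A # ts)) = (#) 0 ` vertices A \<union> shift_first ` vertices (Node ts)"
proof -
  have Cons: "vertices (Node (A # ts)) = insert [] ((#) 0 ` vertices A \<union>
          (\<Union>i \<in> {..<length ts}. (#) (Suc i) ` vertices (ts ! i)))"
    by (simp add: vertices.simps[of "A # ts"] lessThan_Suc_eq_insert_0)
  have shift: "shift_first ` vertices (Node ts) =
          insert [] (\<Union>i \<in> {..<length ts}. (#) (Suc i) ` vertices (ts ! i))"
    by (simp add: vertices.simps[of ts] image_UN image_image)
  show ?thesis unfolding Cons shift by blast
qed

lemma finite_vertices: "finite (vertices T)"
  by (induction T rule: ptree_Cons_induct) (auto simp: vertices_Nil vertices_Cons)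

lemma disjoint_Cons_0_shift_first: "(#) 0 ` X \<inter> shift_first ` Y = {}"
  by auto

lemma card_vertices: "card (vertices T) = tsize T"
proof (induction T rule: ptree_Cons_induct)
  case Nil
  then show ?case by (simp add: vertices_Nil)
next
  case (Cons A ts)
  have "card (vertices (Node (A # ts))) =
        card ((#) 0 ` vertices A) + card (shift_first ` vertices (Node ts))"
    unfolding vertices_Cons
    by (rule card_Un_disjoint) (simp_all add: finite_vertices disjoint_Cons_0_shift_first)
  also have "\<dots> = card (vertices A) + card (vertices (Node ts))"
    by (simp add: card_image inj_on_subset[OF inj_shift_first])
  finally show ?case using Cons by simp
qed

definition path_length :: "ptree \<Rightarrow> nat" where
  "path_length T = (\<Sum>p \<in> vertices T. length p)"

lemma path_length_Nil: "path_length (Node []) = 0"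
  by (simp add: path_length_def vertices_Nil)

lemma path_length_Cons:
  "path_length (Node (A # ts)) = path_length A + tsize A + path_length (Node ts)"
proof -
  have "path_length (Node (A # ts)) =
        (\<Sum>p \<in> (#) 0 ` vertices A. length p) + (\<Sum>p \<in> shift_first ` vertices (Node ts). length p)"
    unfolding path_length_def vertices_Cons
    by (rule sum.union_disjoint) (simp_all add: finite_vertices disjoint_Cons_0_shift_first)
  also have "\<dots> = (\<Sum>p \<in> vertices A. length p + 1) + path_length (Node ts)"
    by (simp add: path_length_def sum.reindex inj_on_subset[OF inj_shift_first])
  finally show ?thesis
    by (simp add: sum_Suc path_length_def card_vertices)
qed

lemma lcp_commute: "lcp u w = lcp w u"
  by (induction u w rule: lcp.induct) (auto elim: lcp.elims)

lemma path_edges_commute: "path_edges u w = path_edges w u"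
  unfolding path_edges_def by (simp add: lcp_commute[of w u] Un_commute)

lemma tdist_commute: "tdist u w = tdist w u"
  unfolding tdist_def by (simp add: path_edges_commute)

lemma inj_on_root_path_edge: "inj_on (\<lambda>k. (take k u, take (Suc k) u)) {..<length u}"
proof (rule inj_onI)
  fix k j assume "k \<in> {..<length u}" "j \<in> {..<length u}"
    and "(take k u, take (Suc k) u) = (take j u, take (Suc j) u)"
  then have "length (take k u) = length (take j u)" by simp
  with \<open>k \<in> {..<length u}\<close> \<open>j \<in> {..<length u}\<close> show "k = j" by simp
qed

lemma tdist_lcp_Nil:
  assumes "lcp u w = []"
  shows "tdist u w = length u + length w"
proof -
  let ?E = "\<lambda>v. (\<lambda>k. (take k v, take (Suc k) v)) ` {..<length v}"
  have card_E: "card (?E v) = length v" for v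
    by (simp add: card_image[OF inj_on_root_path_edge])
  have "path_edges u w = ?E u \<union> ?E w"
    unfolding path_edges_def assms by auto
  moreover have "?E u \<inter> ?E w = {}"
  proof (rule ccontr)
    assume "?E u \<inter> ?E w \<noteq> {}"
    then obtain k j where "take (Suc k) u = take (Suc j) w" "k < length u" "j < length w"
      by auto
    with assms show False by (cases u; cases w) (auto split: if_splits)
  qed
  ultimately show ?thesis
    unfolding tdist_def by (simp add: card_Un_disjoint card_E)
qed

section \<open>Distances across the key edge\<close>

lemma key_edge_eq_root_path_edge_iff:
  "key_edge = (take k u, take (Suc k) u) \<longleftrightarrow> k = 0 \<and> take 1 u = [0]"
  unfolding key_edge_def by (cases u; cases k) auto

lemma key_edge_in_path_edges_iff:
  "key_edge \<in> path_edges u w \<longleftrightarrow> lcp u w = [] \<and> (take 1 u = [0] \<or> take 1 w = [0])"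
  unfolding path_edges_def
  by (auto simp: key_edge_eq_root_path_edge_iff simp del: One_nat_def)

lemma key_pairs_Cons:
  "key_pairs (Node (A # ts)) =
     {(u, w). (u \<in> (#) 0 ` vertices A \<and> w \<in> shift_first ` vertices (Node ts) \<or>
               u \<in> shift_first ` vertices (Node ts) \<and> w \<in> (#) 0 ` vertices A) \<and> u < w}"
proof -
  have "take (Suc 0) (shift_first q) \<noteq> [0]" for q by (cases q) auto
  then show ?thesis
    unfolding key_pairs_def vertices_Cons key_edge_in_path_edges_iff
    by (auto simp: lcp_commute[of "shift_first _"])
qed

lemma sum_sum_add:
  "(\<Sum>x \<in> A. \<Sum>y \<in> B. f x + g y)
     = of_nat (card B) * sum f A + of_nat (card A) * (sum g B :: 'a :: comm_semiring_1)"
  by (simp add: sum.distrib sum_distrib_left)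

lemma sum_pairs_between_disjoint:
  fixes X Y :: "'a :: linorder set"
  assumes "finite X" "finite Y" "X \<inter> Y = {}" and symmetric: "\<And>u w. f u w = f w u"
  shows "(\<Sum>(u, w) \<in> {(u, w). (u \<in> X \<and> w \<in> Y \<or> u \<in> Y \<and> w \<in> X) \<and> u < w}. f u w)
       = (\<Sum>u \<in> X. \<Sum>w \<in> Y. f u w)"
proof -
  let ?L = "{(u, w) \<in> X \<times> Y. u < w}" and ?G = "{(u, w) \<in> X \<times> Y. w < u}"
    and ?R = "{(u, w) \<in> Y \<times> X. u < w}"
  have "?L \<subseteq> X \<times> Y" "?G \<subseteq> X \<times> Y" "?R \<subseteq> Y \<times> X"
    by auto
  then have finite: "finite ?L" "finite ?G" "finite ?R"
    using assms(1,2) by (simp_all add: finite_subset)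
  have pairs: "{(u, w). (u \<in> X \<and> w \<in> Y \<or> u \<in> Y \<and> w \<in> X) \<and> u < w} = ?L \<union> ?R"
    by auto
  have product: "?L \<union> ?G = X \<times> Y"
    using assms(3) by (auto simp: neq_iff)
  have "(\<Sum>(u, w) \<in> ?L \<union> ?R. f u w) = (\<Sum>(u, w) \<in> ?L. f u w) + (\<Sum>(u, w) \<in> ?R. f u w)"
    using finite assms(3) by (intro sum.union_disjoint) auto
  also have "(\<Sum>(u, w) \<in> ?R. f u w) = (\<Sum>(u, w) \<in> ?G. f u w)"
    by (rule sum.reindex_bij_witness[of _ prod.swap prod.swap]) (auto simp: symmetric)
  also have "(\<Sum>(u, w) \<in> ?L. f u w) + (\<Sum>(u, w) \<in> ?G. f u w) = (\<Sum>(u, w) \<in> ?L \<union> ?G. f u w)"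
    using finite by (intro sum.union_disjoint[symmetric]) auto
  also have "\<dots> = (\<Sum>(u, w) \<in> X \<times> Y. f u w)"
    by (simp only: product)
  finally show ?thesis
    unfolding pairs by (simp add: sum.cartesian_product)
qed

definition key_distance_sum :: "ptree \<Rightarrow> nat" where
  "key_distance_sum T = (\<Sum>(u, w) \<in> key_pairs T. tdist u w)"

lemma key_distance_sum_Nil: "key_distance_sum (Node []) = 0"
proof -
  have "key_pairs (Node []) = {}" by (auto simp: key_pairs_def vertices_Nil)
  then show ?thesis by (simp add: key_distance_sum_def)
qed

lemma key_distance_sum_Cons:
  "key_distance_sum (Node (A # ts)) =
     tsize (Node ts) * (path_length A + tsize A) + tsize A * path_length (Node ts)"
proof -
  let ?B = "Node ts"
  have "key_distance_sum (Node (A # ts)) =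
        (\<Sum>u \<in> (#) 0 ` vertices A. \<Sum>w \<in> shift_first ` vertices ?B. tdist u w)"
    unfolding key_distance_sum_def key_pairs_Cons
    by (rule sum_pairs_between_disjoint)
      (simp_all add: finite_vertices disjoint_Cons_0_shift_first tdist_commute)
  also have "\<dots> = (\<Sum>p \<in> vertices A. \<Sum>q \<in> vertices ?B. (length p + 1) + length q)"
    by (simp add: sum.reindex inj_on_subset[OF inj_shift_first] tdist_lcp_Nil)
  also have "\<dots> = tsize ?B * (path_length A + tsize A) + tsize A * path_length ?B"
    unfolding sum_sum_add by (simp add: sum_Suc card_vertices path_length_def)
  finally show ?thesis .
qed

section \<open>Trees of a given size\<close>

fun graft :: "ptree \<Rightarrow> ptree \<Rightarrow> ptree" where
  "graft A (Node ts) = Node (A # ts)"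

lemma tsize_graft: "tsize (graft A B) = tsize A + tsize B"
  by (cases B) simp

lemma path_length_graft: "path_length (graft A B) = path_length A + tsize A + path_length B"
  by (cases B) (simp add: path_length_Cons)

lemma key_distance_sum_graft:
  "key_distance_sum (graft A B) = (path_length A + tsize A) * tsize B + tsize A * path_length B"
  by (cases B) (simp add: key_distance_sum_Cons)

lemma inj_graft: "inj (case_prod graft)"
proof (rule injI, clarify)
  fix A B A' B' assume "graft A B = graft A' B'"
  then show "A = A' \<and> B = B'" by (cases B; cases B') simp
qed

lemma tsize_pos: "tsize T > 0"
  by (cases T) simp

lemma trees_of_size_0: "{T. tsize T = 0} = {}"
  using tsize_pos by auto

lemma trees_of_size_1: "{T. tsize T = Suc 0} = {Node []}"
proof (intro equalityI subsetI)
  fix T assume size: "T \<in> {T. tsize T = Suc 0}"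
  obtain ts where T: "T = Node ts" by (cases T)
  show "T \<in> {Node []}"
  proof (cases ts)
    case (Cons A ts')
    with size T tsize_pos[of A] tsize_pos[of "Node ts'"] show ?thesis by simp
  qed (simp add: T)
qed simp

lemma trees_of_size_graft:
  assumes "n \<noteq> 1"
  shows "{T. tsize T = n} = case_prod graft ` (\<Union>a \<in> {0..n}. {A. tsize A = a} \<times> {B. tsize B = n - a})"
proof (intro equalityI subsetI)
  fix T assume "T \<in> {T. tsize T = n}"
  moreover obtain ts where T: "T = Node ts" by (cases T)
  ultimately obtain A ts' where "ts = A # ts'" "tsize A + tsize (Node ts') = n"
    using assms by (cases ts) auto
  then show "T \<in> case_prod graft ` (\<Union>a \<in> {0..n}. {A. tsize A = a} \<times> {B. tsize B = n - a})"
    using T by (intro image_eqI[of _ _ "(A, Node ts')"]) auto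
qed (auto simp: tsize_graft)

lemma finite_trees_of_size: "finite {T. tsize T = n}"
proof (induction n rule: less_induct)
  case (less n)
  show ?case
  proof (cases "n = 1")
    case True
    then show ?thesis by (simp add: trees_of_size_1)
  next
    case False
    have "finite ({A. tsize A = a} \<times> {B. tsize B = n - a})" for a
    proof (cases "0 < a \<and> a < n")
      case True
      then show ?thesis using less by simp
    qed (auto simp: trees_of_size_0)
    then show ?thesis unfolding trees_of_size_graft[OF False] by blast
  qed
qed

lemma sum_trees_of_size_graft:
  assumes "n \<noteq> 1"
  shows "(\<Sum>T | tsize T = n. f T) = (\<Sum>a = 0..n. \<Sum>A | tsize A = a. \<Sum>B | tsize B = n - a. f (graft A B))"
proof -
  have "(\<Sum>T | tsize T = n. f T) =
        (\<Sum>(A, B) \<in> (\<Union>a \<in> {0..n}. {A. tsize A = a} \<times> {B. tsize B = n - a}). f (graft A B))"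
    unfolding trees_of_size_graft[OF assms]
    by (rule sum.reindex_cong[OF inj_on_subset[OF inj_graft subset_UNIV]]) auto
  also have "\<dots> = (\<Sum>a = 0..n. \<Sum>(A, B) \<in> {A. tsize A = a} \<times> {B. tsize B = n - a}. f (graft A B))"
    by (rule sum.UNION_disjoint) (auto simp: finite_trees_of_size)
  finally show ?thesis
    by (simp add: sum.cartesian_product)
qed

section \<open>Generating functions of weighted plane trees\<close>

definition tree_fps :: "(ptree \<Rightarrow> 'a :: comm_semiring_1) \<Rightarrow> 'a fps" where
  "tree_fps f = Abs_fps (\<lambda>n. \<Sum>T | tsize T = n. f T)"

definition graft_fps :: "(ptree \<Rightarrow> ptree \<Rightarrow> 'a :: comm_semiring_1) \<Rightarrow> 'a fps" where
  "graft_fps F = Abs_fps (\<lambda>n. \<Sum>a = 0..n. \<Sum>A | tsize A = a. \<Sum>B | tsize B = n - a. F A B)"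

lemma tree_fps_nth: "tree_fps f $ n = (\<Sum>T | tsize T = n. f T)"
  by (simp add: tree_fps_def)

lemma tree_fps_graft:
  "tree_fps f = fps_const (f (Node [])) * fps_X + graft_fps (\<lambda>A B. f (graft A B))"
proof (rule fps_ext)
  fix n
  show "tree_fps f $ n = (fps_const (f (Node [])) * fps_X + graft_fps (\<lambda>A B. f (graft A B))) $ n"
  proof (cases "n = 1")
    case True
    then show ?thesis
      by (simp add: tree_fps_nth graft_fps_def trees_of_size_0 trees_of_size_1)
  next
    case False
    then show ?thesis
      by (simp add: tree_fps_nth graft_fps_def sum_trees_of_size_graft[OF False])
  qed
qed

lemma graft_fps_add: "graft_fps (\<lambda>A B. F A B + G A B) = graft_fps F + graft_fps G"
  by (simp add: graft_fps_def fps_eq_iff sum.distrib)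

lemma graft_fps_mult: "graft_fps (\<lambda>A B. g A * h B) = tree_fps g * tree_fps h"
  by (simp add: graft_fps_def tree_fps_def fps_eq_iff fps_mult_nth sum_product)

lemma tree_fps_tsize_mult:
  "tree_fps (\<lambda>T. of_nat (tsize T) * f T) = fps_X * fps_deriv (tree_fps f)"
proof (rule fps_ext)
  fix n
  show "tree_fps (\<lambda>T. of_nat (tsize T) * f T) $ n = (fps_X * fps_deriv (tree_fps f)) $ n"
  proof (cases n)
    case 0
    then show ?thesis by (simp add: tree_fps_nth trees_of_size_0)
  next
    case (Suc m)
    then show ?thesis by (simp add: tree_fps_nth sum_distrib_left)
  qed
qed

lemma tree_fps_add: "tree_fps (\<lambda>T. f T + g T) = tree_fps f + tree_fps g"
  by (simp add: tree_fps_def fps_eq_iff sum.distrib)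

lemma fps_second_derivative_identity:
  fixes T Q S :: "'a :: field_char_0 fps"
  assumes T: "T = fps_X + T * T"
    and G: "G = fps_X * fps_deriv T"
    and Q: "Q = (Q + G) * T + T * Q"
    and S: "S = (Q + G) * G + G * Q"
  shows "2 * S = fps_X ^ 2 * fps_deriv (fps_deriv T)"
proof -
  let ?D = "fps_deriv T" and ?D2 = "fps_deriv (fps_deriv T)"
  (* T $ 0 is 0 or 1, so 1 - 2T can be cancelled; multiplying by it eliminates Q. *)
  have "(1 - 2 * T) $ 0 \<noteq> 0"
  proof
    assume "(1 - 2 * T) $ 0 = 0"
    then have "T $ 0 = 1 / 2" by (simp add: field_simps)
    moreover have "T $ 0 = T $ 0 * T $ 0"
      using arg_cong[OF T, of "\<lambda>f. f $ 0"] by simp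
    ultimately show False by (auto simp: field_simps)
  qed
  then have nonzero: "1 - 2 * T \<noteq> 0"
    by (metis fps_zero_nth)
  have "?D = fps_deriv (fps_X + T * T)"
    using T by (rule arg_cong)
  then have D: "?D = 1 + 2 * T * ?D"
    by (simp add: algebra_simps mult_2)
  have "?D2 = fps_deriv (1 + 2 * T * ?D)"
    using D by (rule arg_cong)
  then have "?D2 = 2 * ?D * ?D + 2 * T * ?D2"
    by (simp add: algebra_simps mult_2)
  then have D2: "?D2 * (1 - 2 * T) = 2 * ?D * ?D"
    by (simp add: algebra_simps)
  have Q': "Q * (1 - 2 * T) = T * G"
    using Q by (simp add: algebra_simps)
  have "S * (1 - 2 * T) = 2 * G * (Q * (1 - 2 * T)) + G * G * (1 - 2 * T)"
    by (subst S) (simp add: algebra_simps)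
  also have "\<dots> = G * G"
    by (simp only: Q') (simp add: algebra_simps)
  finally have S': "S * (1 - 2 * T) = G * G" .
  have "(2 * S) * (1 - 2 * T) = 2 * (G * G)"
    by (simp only: S' mult.assoc)
  also have "\<dots> = fps_X ^ 2 * (2 * ?D * ?D)"
    by (simp add: G power2_eq_square algebra_simps)
  also have "\<dots> = (fps_X ^ 2 * ?D2) * (1 - 2 * T)"
    by (simp only: D2 mult.assoc)
  finally show ?thesis
    using nonzero by simp
qed

abbreviation tree_count_fps :: "real fps" where
  "tree_count_fps \<equiv> tree_fps (\<lambda>_. 1)"

lemma tree_count_fps_eq: "tree_count_fps = fps_X + tree_count_fps * tree_count_fps"
  using tree_fps_graft[of "\<lambda>_. 1 :: real"] graft_fps_mult[of "\<lambda>_. 1 :: real" "\<lambda>_. 1"] by simp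

lemma tsize_fps: "tree_fps (\<lambda>T. real (tsize T)) = fps_X * fps_deriv tree_count_fps"
  using tree_fps_tsize_mult[of "\<lambda>_. 1 :: real"] by simp

lemma path_length_fps:
  defines "P \<equiv> tree_fps (\<lambda>T. real (path_length T))" and "G \<equiv> tree_fps (\<lambda>T. real (tsize T))"
  shows "P = (P + G) * tree_count_fps + tree_count_fps * P"
proof -
  have "P = graft_fps (\<lambda>A B. real (path_length A + tsize A) * 1 + 1 * real (path_length B))"
    unfolding P_def by (subst tree_fps_graft) (simp add: path_length_graft path_length_Nil)
  also have "\<dots> = (P + G) * tree_count_fps + tree_count_fps * P"
    by (simp only: graft_fps_add graft_fps_mult of_nat_add tree_fps_add P_def G_def)
  finally show ?thesis .
qed

lemma key_distance_fps:
  defines "S \<equiv> tree_fps (\<lambda>T. real (key_distance_sum T))"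
    and "P \<equiv> tree_fps (\<lambda>T. real (path_length T))" and "G \<equiv> tree_fps (\<lambda>T. real (tsize T))"
  shows "S = (P + G) * G + G * P"
proof -
  have "S = graft_fps (\<lambda>A B. real (path_length A + tsize A) * real (tsize B)
                              + real (tsize A) * real (path_length B))"
    unfolding S_def by (subst tree_fps_graft) (simp add: key_distance_sum_graft key_distance_sum_Nil)
  also have "\<dots> = (P + G) * G + G * P"
    by (simp only: graft_fps_add graft_fps_mult of_nat_add tree_fps_add P_def G_def)
  finally show ?thesis .
qed

section \<open>Catalan numbers and the main identity\<close>

lemma central_binomial_Suc:
  "(2 * Suc m choose Suc m) * Suc m = (2 * m choose m) * (2 * (2 * m + 1))"
proof -
  have "(2 * Suc m choose Suc m) * Suc m * Suc m = Suc (Suc (2 * m)) * (Suc (2 * m) choose m) * Suc m"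
    using Suc_times_binomial_eq[of "Suc (2 * m)" m] by simp
  also have "\<dots> = Suc (Suc (2 * m)) * ((Suc (2 * m) choose Suc m) * Suc m)"
    using binomial_symmetric[of "Suc m" "Suc (2 * m)"] by simp
  also have "\<dots> = Suc (Suc (2 * m)) * (Suc (2 * m) * (2 * m choose m))"
    using Suc_times_binomial_eq[of "2 * m" m] by simp
  also have "\<dots> = (2 * m choose m) * (2 * (2 * m + 1)) * Suc m"
    by (simp add: algebra_simps)
  finally show ?thesis
    by (metis mult_right_cancel Zero_not_Suc)
qed

lemma gbinomial_half_times_power:
  "of_nat (Suc m) * (((1 / 2 :: 'a :: field_char_0) gchoose Suc m) * (- 4) ^ Suc m)
     = - 2 * of_nat (2 * m choose m)"
proof (induction m)
  case 0
  then show ?case by simp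
next
  case (Suc m)
  let ?g = "\<lambda>k. (1 / 2 :: 'a) gchoose k" and ?c = "\<lambda>k. ((1 / 2 :: 'a) gchoose k) * (- 4) ^ k"
  have absorption: "of_nat (Suc (Suc m)) * ?g (Suc (Suc m)) = (1 / 2 - of_nat (Suc m)) * ?g (Suc m)"
    using gbinomial_mult_1[of "1 / 2 :: 'a" "Suc m"] by (metis add_diff_cancel_left' left_diff_distrib)
  have factor: "(1 / 2 - of_nat (Suc m)) * (- 4) = (2 * (2 * of_nat m + 1) :: 'a)"
    by (simp add: algebra_simps)
  have "of_nat (Suc (Suc m)) * ?c (Suc (Suc m)) = of_nat (Suc (Suc m)) * ?g (Suc (Suc m)) * (- 4) * (- 4) ^ Suc m"
    by (simp only: power_Suc mult.assoc)
  also have "\<dots> = ((1 / 2 - of_nat (Suc m)) * (- 4)) * ?c (Suc m)"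
    by (simp only: absorption) (simp only: mult_ac)
  also have "\<dots> = 2 * (2 * of_nat m + 1) * ?c (Suc m)"
    by (simp only: factor)
  finally have "of_nat (Suc m) * (of_nat (Suc (Suc m)) * ?c (Suc (Suc m)))
      = 2 * (2 * of_nat m + 1) * (of_nat (Suc m) * ?c (Suc m))"
    by (metis mult.left_commute)
  also have "\<dots> = - 2 * of_nat ((2 * m choose m) * (2 * (2 * m + 1)))"
    by (simp only: Suc.IH) (simp add: algebra_simps)
  also have "\<dots> = of_nat (Suc m) * (- 2 * of_nat (2 * Suc m choose Suc m))"
    by (simp only: central_binomial_Suc[symmetric] of_nat_mult) (simp add: algebra_simps)
  finally show ?case
    using of_nat_neq_0 mult_left_cancel by blast
qed

lemma catalan_fps_nth:
  fixes T :: "'a :: field_char_0 fps"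
  assumes T: "T = fps_X + T * T" and T0: "T $ 0 = 0"
  shows "T $ Suc m = of_nat (2 * m choose m) / of_nat (Suc m)"
proof -
  (* V = sqrt (1 - 4x); of the two candidates 1 + V and 1 - V for 2T only the latter has constant term 0. *)
  define V where "V = fps_binomial (1 / 2 :: 'a) oo (- 4 * fps_X)"
  have "V ^ 2 = fps_binomial (2 * (1 / 2)) oo (- 4 * fps_X)"
    unfolding V_def by (simp add: fps_compose_power fps_binomial_power)
  also have "\<dots> = 1 - 4 * fps_X"
    by (simp add: fps_binomial_1 fps_compose_add_distrib)
  finally have V: "V * V = 1 - 4 * fps_X"
    by (simp add: power2_eq_square)
  have TT: "T * T = T - fps_X"
    using T by (metis add_diff_cancel_left')
  have "(2 * T - (1 - V)) * (2 * T + (1 - V) - 2) = 4 * (T * T) - V * V + 1 - 4 * T"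
    by (simp add: algebra_simps)
  also have "\<dots> = 0"
    by (simp add: TT V algebra_simps)
  finally have product: "(2 * T - (1 - V)) * (2 * T + (1 - V) - 2) = 0" .
  have "(2 * T + (1 - V) - 2) $ 0 \<noteq> 0"
    by (simp add: T0 V_def numeral_fps_const)
  then have "2 * T + (1 - V) - 2 \<noteq> 0"
    by (metis fps_zero_nth)
  with product have "2 * T = 1 - V"
    by simp
  then have "(2 * T) $ Suc m = (1 - V) $ Suc m"
    by (rule arg_cong)
  then have "2 * T $ Suc m = - V $ Suc m"
    by (simp add: numeral_fps_const)
  moreover have "V $ Suc m = ((1 / 2) gchoose Suc m) * (- 4) ^ Suc m"
    by (simp add: V_def neg_numeral_fps_const)
  ultimately have "of_nat (Suc m) * (2 * T $ Suc m) = 2 * of_nat (2 * m choose m)"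
    using gbinomial_half_times_power[of m, where 'a = 'a] by simp
  then show ?thesis
    by (simp add: field_simps del: of_nat_Suc)
qed

theorem proposition3p2:
  fixes n :: nat
  assumes "n \<ge> 2"
  shows "real (\<Sum>T \<in> {T. tsize T = n}. \<Sum>(u, w) \<in> key_pairs T. tdist u w)
         = real (n choose 2) * (real ((2 * n - 2) choose (n - 1)) / real n)"
proof -
  obtain k where n: "n = Suc (Suc k)"
    using assms by (metis add_2_eq_Suc le_Suc_ex)
  have key: "2 * tree_fps (\<lambda>T. real (key_distance_sum T))
      = fps_X ^ 2 * fps_deriv (fps_deriv tree_count_fps)"
    by (rule fps_second_derivative_identity
        [OF tree_count_fps_eq tsize_fps path_length_fps key_distance_fps])
  have "2 * real (\<Sum>T \<in> {T. tsize T = n}. \<Sum>(u, w) \<in> key_pairs T. tdist u w)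
      = (2 * tree_fps (\<lambda>T. real (key_distance_sum T))) $ n"
    by (simp add: tree_fps_nth key_distance_sum_def numeral_fps_const)
  also have "\<dots> = real n * (real n - 1) * tree_count_fps $ n"
    by (simp add: key n fps_X_power_mult_nth)
  also have "tree_count_fps $ n = real ((2 * n - 2) choose (n - 1)) / real n"
    using catalan_fps_nth[OF tree_count_fps_eq, of "Suc k"]
    by (simp add: n tree_fps_nth trees_of_size_0)
  also have "real n * (real n - 1) = 2 * real (n choose 2)"
  proof -
    have "real (2 * (n choose 2)) = real (n * (n - 1))"
      using times_binomial_minus1_eq[of 2 n] by simp
    then show ?thesis
      using assms by (simp add: of_nat_diff)
  qed
  finally show ?thesis
    by simp
qed

end
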